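(* Let $n\ge3$. For an affine $n$-diagram $D$ with at least one vertical edge, let $S_1$ (resp. $S_2$) be the involution of $\{1,\dots,n\}$ interchanging $i$ and $j$ exactly when the top nodes (resp. bottom nodes) $i$ and $j$ of $D$ are joined by an edge. Then $S_1,S_2\in\mathrm{Ann}(n)\cap I(t)$ for some $t>0$, and $D\mapsto[S_1,S_2,w(D)]$ is a bijection from the set of affine $n$-diagrams with at least one vertical edge onto the set of triples $[S_1,S_2,w]$ with $S_1,S_2\in\mathrm{Ann}(n)\cap I(t)$ for some $t>0$ and $w\in\mathbb{Z}$.
   Context: An affine $n$-diagram consists of the nodes $\mathbb{Z}\times\{0,1\}\subset\mathbb{R}^2$ (bottom row $\mathbb{Z}\times\{0\}$, top row $\mathbb{Z}\times\{1\}$) together with curves called edges such that: every node is an endpoint of exactly one edge; edges lie in $\mathbb{R}\times[0,1]$; an edge not joining two nodes is an infinite horizontal line meeting no node, and there are finitely many such; no two edges intersect; the diagram is invariant under horizontal translation by $n$. Diagrams are taken up to isotopy; equivalently, drawn on a cylinder with nodes labelled $1,\dots,n$ (the residues mod $n$ of the node positions) on a top and a bottom circle. An edge is vertical if it joins a top node to a bottom node. An involution $S$ of $\{1,\dots,n\}$ is annular if for each pair $i<j$ interchanged by $S$: $S(\{i,\dots,j\})=\{i,\dots,j\}$, and $\{i,\dots,j\}$ contains either no fixed point of $S$ or all fixed points of $S$. $\mathrm{Ann}(n)$ is the set of annular involutions and $I(t)$ the set of involutions with exactly $t$ fixed points. For a diagram $D$ with a vertical edge, $w_1(D)$ is the number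 of pairs $(i,j)\in\mathbb{Z}^2$ with $i>j$ such that bottom node $(j,0)$ is joined to top node $(i,1)$ by an edge crossing the line $x=1/2$; $w_2(D)$ is the same with $i<j$; $w(D)=w_1(D)-w_2(D)$. *)

theory Defs
  imports Main
begin

text \<open>Nodes: (k, False) is the bottom node (k,0), (k, True) is the top node (k,1).
An affine n-diagram with at least one vertical edge has no horizontal lines (they would
meet the vertical edge), so up to isotopy it is determined by the perfect matching
of nodes given by its edges. We encode it as a fixed-point-free involution m on nodes
(m x is the other endpoint of the edge at x), invariant under translation by n and
drawable without crossings in the strip.\<close>

type_synonym node = "int \<times> bool"

text \<open>Linear order of the boundary points of the strip: bottom row left to right,
then top row right to left. Two chords can be drawn disjointly in the strip iff
they do not interleave in this order.\<close>
definition bnd_less :: "node \<Rightarrow> node \<Rightarrow> bool" where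
  "bnd_less x y \<longleftrightarrow>
     (\<not> snd x \<and> snd y) \<or>
     (\<not> snd x \<and> \<not> snd y \<and> fst x < fst y) \<or>
     (snd x \<and> snd y \<and> fst y < fst x)"

definition is_affine_diagram_matching :: "nat \<Rightarrow> (node \<Rightarrow> node) \<Rightarrow> bool" where
  "is_affine_diagram_matching n m \<longleftrightarrow>
     (\<forall>x. m (m x) = x \<and> m x \<noteq> x) \<and>
     (\<forall>k b. m (k + int n, b) = (fst (m (k, b)) + int n, snd (m (k, b)))) \<and>
     \<not> (\<exists>a c. bnd_less a c \<and> bnd_less c (m a) \<and> bnd_less (m a) (m c))"

definition has_vertical_edge :: "(node \<Rightarrow> node) \<Rightarrow> bool" where
  "has_vertical_edge m \<longleftrightarrow> (\<exists>x. snd (m x) \<noteq> snd x)"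

definition diagrams_vert :: "nat \<Rightarrow> (node \<Rightarrow> node) set" where
  "diagrams_vert n = {m. is_affine_diagram_matching n m \<and> has_vertical_edge m}"

definition lab :: "nat \<Rightarrow> int \<Rightarrow> nat" where
  "lab n k = nat ((k - 1) mod int n + 1)"

definition row_inv :: "nat \<Rightarrow> bool \<Rightarrow> (node \<Rightarrow> node) \<Rightarrow> nat \<Rightarrow> nat" where
  "row_inv n b m i =
     (if i \<in> {1..n} \<and> snd (m (int i, b)) = b then lab n (fst (m (int i, b))) else i)"

definition S1 :: "nat \<Rightarrow> (node \<Rightarrow> node) \<Rightarrow> nat \<Rightarrow> nat" where
  "S1 n m = row_inv n True m"

definition S2 :: "nat \<Rightarrow> (node \<Rightarrow> node) \<Rightarrow> nat \<Rightarrow> nat" where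
  "S2 n m = row_inv n False m"

text \<open>w1: vertical edges from bottom (j,0) to top (i,1) with i > j crossing x = 1/2,
i.e. j \<le> 0 < i; w2: those with i < j crossing x = 1/2, i.e. i \<le> 0 < j.\<close>
definition w1 :: "(node \<Rightarrow> node) \<Rightarrow> nat" where
  "w1 m = card {(i, j). m (j, False) = (i, True) \<and> i > j \<and> j \<le> 0 \<and> 1 \<le> i}"

definition w2 :: "(node \<Rightarrow> node) \<Rightarrow> nat" where
  "w2 m = card {(i, j). m (j, False) = (i, True) \<and> i < j \<and> i \<le> 0 \<and> 1 \<le> j}"

definition wind :: "(node \<Rightarrow> node) \<Rightarrow> int" where
  "wind m = int (w1 m) - int (w2 m)"

definition involutions :: "nat \<Rightarrow> (nat \<Rightarrow> nat) set" where
  "involutions n = {S. (\<forall>i\<in>{1..n}. S i \<in> {1..n} \<and> S (S i) = i) \<and>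
                       (\<forall>i. i \<notin> {1..n} \<longrightarrow> S i = i)}"

definition fixpts :: "nat \<Rightarrow> (nat \<Rightarrow> nat) \<Rightarrow> nat set" where
  "fixpts n S = {i \<in> {1..n}. S i = i}"

definition Inv_t :: "nat \<Rightarrow> nat \<Rightarrow> (nat \<Rightarrow> nat) set" where
  "Inv_t n t = {S \<in> involutions n. card (fixpts n S) = t}"

definition Ann :: "nat \<Rightarrow> (nat \<Rightarrow> nat) set" where
  "Ann n = {S \<in> involutions n. \<forall>i j. i \<in> {1..n} \<and> j \<in> {1..n} \<and> i < j \<and> S i = j \<longrightarrow>
              S ` {i..j} = {i..j} \<and>
              ({i..j} \<inter> fixpts n S = {} \<or> fixpts n S \<subseteq> {i..j})}"

end

theory Submission
  imports Defs
begin

text \<open>In each row,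
  the edges that are not vertical form a periodic non-crossing matching of the remaining
  positions in which no arc passes over a vertical edge. Read modulo \<open>n\<close>, such a row is
  an annular involution whose fixed points are the positions of the vertical edges; conversely,
  an annular involution with a fixed point lifts to exactly one such row, an arc that encloses
  the fixed points being drawn around the cylinder. The vertical edges join the vertical
  positions of the top row to those of the bottom row monotonically and periodically, so both rows
  have the same number \<open>t\<close> of them per period and, numbering vertical positions by their
  rank relative to the cut \<open>x = 1/2\<close>, the edges shift the rank by a constant. This constant is
  \<open>w(D)\<close>. So \<open>D\<close> is determined by \<open>(S\<^sub>1, S\<^sub>2, w(D))\<close>, and every triple is attained by joining
  the vertical positions with rank difference \<open>w\<close>.\<close>

section \<open>Residue labels\<close>

lemma int_lab: "n > 0 \<Longrightarrow> int (lab n k) = (k - 1) mod int n + 1"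
  unfolding lab_def by simp

lemma lab_bounds: "n > 0 \<Longrightarrow> lab n k \<in> {1..n}"
proof -
  assume n: "n > 0"
  have "0 \<le> (k - 1) mod int n" "(k - 1) mod int n < int n" using n by simp_all
  then show ?thesis using int_lab[OF n, of k] by simp
qed

lemma lab_mod: "n > 0 \<Longrightarrow> int (lab n k) mod int n = k mod int n"
  by (simp add: int_lab mod_add_left_eq)

lemma lab_decomp: "n > 0 \<Longrightarrow> k = int (lab n k) + (k - 1) div int n * int n"
  by (simp add: int_lab)

lemma lab_of_nat: "i \<in> {1..n} \<Longrightarrow> lab n (int i) = i"
  unfolding lab_def by auto

lemma lab_eq_nat: "1 \<le> k \<Longrightarrow> k \<le> int n \<Longrightarrow> lab n k = nat k"
  unfolding lab_def by simp

lemma lab_add_mult: "lab n (k + q * int n) = lab n k"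
proof -
  have "k + q * int n - 1 = (k - 1) + q * int n" by simp
  then have "(k + q * int n - 1) mod int n = (k - 1) mod int n" by (metis mod_mult_self1)
  then show ?thesis unfolding lab_def by simp
qed

lemma lab_add: "lab n (k + int n) = lab n k"
  using lab_add_mult[of n k 1] by simp

lemma lab_eq_iff: "n > 0 \<Longrightarrow> lab n k = lab n l \<longleftrightarrow> k mod int n = l mod int n"
  by (metis lab_mod lab_def mod_diff_left_eq of_nat_eq_iff)

lemma int_lab_eq_iff:
  "n > 0 \<Longrightarrow> int (lab n k) = j \<longleftrightarrow> j \<in> {1..int n} \<and> k mod int n = j mod int n"
proof
  assume n: "n > 0" and "int (lab n k) = j"
  then show "j \<in> {1..int n} \<and> k mod int n = j mod int n"
    using lab_bounds[OF n, of k] lab_mod[OF n, of k] by auto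
next
  assume n: "n > 0" and j: "j \<in> {1..int n} \<and> k mod int n = j mod int n"
  then have "nat j \<in> {1..n}" "j = int (nat j)" by auto
  then show "int (lab n k) = j"
    using lab_of_nat[of "nat j" n] lab_eq_iff[OF n, of k "int (nat j)"] j by simp
qed

lemma eq_if_mod_eq_dist_less:
  fixes k l N :: int
  assumes "k mod N = l mod N" and "\<bar>k - l\<bar> < N"
  shows "k = l"
proof -
  obtain c where c: "k - l = N * c" using assms(1) by (metis mod_eq_dvd_iff dvdE)
  have "c = 0"
  proof (rule ccontr)
    assume "c \<noteq> 0"
    moreover have N: "N > 0" using assms(2) by linarith
    ultimately have "N * 1 \<le> N * \<bar>c\<bar>" by (intro mult_left_mono) auto
    then show False using assms(2) c N by (simp add: abs_mult)
  qed
  then show ?thesis using c by simp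
qed

section \<open>Periodic sets of positions and their rank\<close>

lemma add_mult_shift:
  fixes f :: "int \<Rightarrow> int"
  assumes "\<And>k. f (k + N) = f k + c"
  shows "f (k + q * N) = f k + q * c"
proof (induction q rule: int_induct[where k = 0])
  case (step1 i)
  then show ?case using assms[of "k + i * N"] by (simp add: algebra_simps)
next
  case (step2 i)
  then show ?case using assms[of "k + (i - 1) * N"] by (simp add: algebra_simps)
qed simp

definition periodic :: "nat \<Rightarrow> int set \<Rightarrow> bool" where
  "periodic n V \<longleftrightarrow> (\<forall>k. k + int n \<in> V \<longleftrightarrow> k \<in> V)"

lemma periodic_add_mult: "periodic n V \<Longrightarrow> k + q * int n \<in> V \<longleftrightarrow> k \<in> V"
  using add_mult_shift[of "\<lambda>k. of_bool (k \<in> V)" "int n" 0] unfolding periodic_def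
  by (simp add: of_bool_eq_iff)

lemma periodic_lab_iff: "n > 0 \<Longrightarrow> periodic n V \<Longrightarrow> int (lab n k) \<in> V \<longleftrightarrow> k \<in> V"
  using periodic_add_mult[of n V "int (lab n k)" "(k - 1) div int n"] lab_decomp[of n k] by simp

lemma periodic_obtain_in_window:
  assumes n: "n > 0" and "periodic n V" and "V \<noteq> {}"
  obtains v where "v \<in> V" "x \<le> v" "v < x + int n"
proof -
  obtain v0 where v0: "v0 \<in> V" using assms by auto
  define v where "v = x + (v0 - x) mod int n"
  have "v = v0 + (- ((v0 - x) div int n)) * int n" unfolding v_def
    by (simp add: algebra_simps)
  then have "v \<in> V" using periodic_add_mult[OF assms(2), of v0 "- ((v0 - x) div int n)"] v0 by simp
  moreover have "x \<le> v" "v < x + int n" using n unfolding v_def by simp_all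
  ultimately show ?thesis using that by blast
qed

definition rank :: "int set \<Rightarrow> int \<Rightarrow> int" where
  "rank V x = int (card (V \<inter> {1..x})) - int (card (V \<inter> {x<..0}))"

lemma rank_diff: "x \<le> y \<Longrightarrow> rank V y - rank V x = int (card (V \<inter> {x<..y}))"
proof -
  assume xy: "x \<le> y"
  have card_split: "card (V \<inter> {a<..c}) = card (V \<inter> {a<..b}) + card (V \<inter> {b<..c})"
    if "a \<le> b" "b \<le> c" for a b c :: int
  proof -
    have "V \<inter> {a<..c} = (V \<inter> {a<..b}) \<union> (V \<inter> {b<..c})" using that by auto
    then show ?thesis by (simp add: card_Un_disjoint disjoint_iff)
  qed
  have ivl: "{1..z} = {0<..z}" for z :: int by auto
  have rank: "rank V z = int (card (V \<inter> {0<..z})) - int (card (V \<inter> {z<..0}))" for z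
    unfolding rank_def ivl by (rule refl)
  have empty: "card (V \<inter> {a<..b}) = 0" if "b \<le> a" for a b :: int
    using that by (simp add: disjoint_iff)
  consider "0 \<le> x" | "y \<le> 0" | "x < 0" "0 < y" by linarith
  then show ?thesis
  proof cases
    case 1
    then show ?thesis using card_split[of 0 x y] xy empty[of 0 x] empty[of 0 y] rank[of x] rank[of y]
      by linarith
  next
    case 2
    then show ?thesis using card_split[of x y 0] xy empty[of x 0] empty[of y 0] rank[of x] rank[of y]
      by linarith
  next
    case 3
    then show ?thesis using card_split[of x 0 y] empty[of x 0] empty[of 0 y] rank[of x] rank[of y]
      by linarith
  qed
qed

lemma rank_step: "rank V x = rank V (x - 1) + of_bool (x \<in> V)"
proof -
  have "{x - 1<..x} = {x}" by auto
  then have "card (V \<inter> {x - 1<..x}) = of_bool (x \<in> V)" by simp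
  then show ?thesis using rank_diff[of "x - 1" x V] by simp
qed

lemma rank_mono: "x \<le> y \<Longrightarrow> rank V x \<le> rank V y"
  using rank_diff[of x y V] by simp

lemma rank_strict_mono: "x < y \<Longrightarrow> y \<in> V \<Longrightarrow> rank V x < rank V y"
proof -
  assume "x < y" "y \<in> V"
  then have "V \<inter> {x<..y} \<noteq> {}" by auto
  then have "card (V \<inter> {x<..y}) > 0" by (simp add: card_gt_0_iff)
  then show ?thesis using rank_diff[of x y V] \<open>x < y\<close> by simp
qed

lemma rank_inj: "u \<in> V \<Longrightarrow> v \<in> V \<Longrightarrow> rank V u = rank V v \<Longrightarrow> u = v"
  by (metis rank_strict_mono linorder_neq_iff less_irrefl)

lemma rank_zero [simp]: "rank V 0 = 0"
  unfolding rank_def by simp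

lemma rank_pos_iff:
  assumes "v \<in> V"
  shows "1 \<le> rank V v \<longleftrightarrow> 1 \<le> v"
proof
  assume "1 \<le> rank V v"
  show "1 \<le> v"
  proof (rule ccontr)
    assume "\<not> 1 \<le> v"
    then have "rank V v \<le> rank V 0" by (intro rank_mono) simp
    then show False using \<open>1 \<le> rank V v\<close> by simp
  qed
next
  assume "1 \<le> v"
  then have "rank V 0 < rank V v" using assms by (intro rank_strict_mono) simp_all
  then show "1 \<le> rank V v" by simp
qed

lemma card_window:
  assumes n: "n > 0" and p: "periodic n V"
  shows "card (V \<inter> {x<..x + int n}) = card (V \<inter> {1..int n})"
proof -
  have "bij_betw (\<lambda>k. int (lab n k)) (V \<inter> {x<..x + int n}) (V \<inter> {1..int n})"
  proof (rule bij_betwI')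
    fix a b assume ab: "a \<in> V \<inter> {x<..x + int n}" "b \<in> V \<inter> {x<..x + int n}"
    show "int (lab n a) = int (lab n b) \<longleftrightarrow> a = b"
    proof
      assume "int (lab n a) = int (lab n b)"
      then have "a mod int n = b mod int n" using lab_eq_iff[OF n, of a b] by simp
      moreover have "\<bar>a - b\<bar> < int n" using ab by auto
      ultimately show "a = b" by (rule eq_if_mod_eq_dist_less)
    qed simp
  next
    fix a assume "a \<in> V \<inter> {x<..x + int n}"
    then show "int (lab n a) \<in> V \<inter> {1..int n}"
      using periodic_lab_iff[OF n p, of a] lab_bounds[OF n, of a] by simp
  next
    fix i assume i: "i \<in> V \<inter> {1..int n}"
    define k where "k = x + 1 + (i - x - 1) mod int n"
    have "k mod int n = i mod int n" unfolding k_def by (simp add: mod_add_right_eq)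
    then have "int (lab n k) = i" using int_lab_eq_iff[OF n, of k i] i by simp
    moreover have "0 \<le> (i - x - 1) mod int n" "(i - x - 1) mod int n < int n" using n by simp_all
    then have "k \<in> {x<..x + int n}" unfolding k_def by simp
    moreover have "k \<in> V" using periodic_lab_iff[OF n p, of k] i \<open>int (lab n k) = i\<close> by simp
    ultimately show "\<exists>k \<in> V \<inter> {x<..x + int n}. i = int (lab n k)" by auto
  qed
  then show ?thesis by (rule bij_betw_same_card)
qed

lemma card_window_pos:
  assumes n: "n > 0" and p: "periodic n V" and "V \<noteq> {}"
  shows "card (V \<inter> {1..int n}) > 0"
proof -
  obtain v where "v \<in> V" "1 \<le> v" "v < 1 + int n"
    using periodic_obtain_in_window[OF assms] .
  then have "V \<inter> {1..int n} \<noteq> {}" by auto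
  then show ?thesis by (simp add: card_gt_0_iff)
qed

lemma rank_add:
  "n > 0 \<Longrightarrow> periodic n V \<Longrightarrow> rank V (x + int n) = rank V x + int (card (V \<inter> {1..int n}))"
  using rank_diff[of x "x + int n" V] card_window[of n V x] by simp

lemma rank_add_mult:
  assumes "n > 0" and "periodic n V"
  shows "rank V (x + q * int n) = rank V x + q * int (card (V \<inter> {1..int n}))"
  by (rule add_mult_shift) (rule rank_add[OF assms])

lemma rank_surj:
  assumes n: "n > 0" and p: "periodic n V" and ne: "V \<noteq> {}"
  obtains v where "v \<in> V" "rank V v = c"
proof -
  have "\<exists>v\<in>V. rank V v = c"
  proof (rule ccontr)
    assume none: "\<not> (\<exists>v\<in>V. rank V v = c)"
    define t where "t = int (card (V \<inter> {1..int n}))"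
    have t: "t \<ge> 1" using card_window_pos[OF assms] unfolding t_def by simp
    have rank_period: "rank V (q * int n) = q * t" for q
      using rank_add_mult[OF n p, of 0 q] unfolding t_def by simp
    define q0 where "q0 = - \<bar>c\<bar> - 1"
    have "q0 * t \<le> q0 * 1" using t by (intro mult_left_mono_neg) (simp_all add: q0_def)
    then have start: "rank V (q0 * int n) < c" using rank_period[of q0] unfolding q0_def by simp
    have below: "rank V x < c" if "q0 * int n \<le> x" for x
      using that
    proof (induction x rule: int_ge_induct)
      case (step x)
      then show ?case using rank_step[of V "x + 1"] none by (cases "x + 1 \<in> V") auto
    qed (rule start)
    have "\<bar>c\<bar> * 1 \<le> \<bar>c\<bar> * t" using t by (intro mult_left_mono) simp_all
    moreover have "q0 * int n \<le> \<bar>c\<bar> * int n" unfolding q0_def by (simp add: mult_right_mono)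
    ultimately show False using below[of "\<bar>c\<bar> * int n"] rank_period[of "\<bar>c\<bar>"] by simp
  qed
  then show ?thesis using that by blast
qed

section \<open>Rows as periodic non-crossing matchings\<close>

lemma card_int_filter_Icc: "card {i \<in> {1..n}. int i \<in> V} = card (V \<inter> {1..int n})"
proof -
  let ?S = "{i \<in> {1..n}. int i \<in> V}"
  have image: "int ` ?S = V \<inter> {1..int n}"
  proof
    show "V \<inter> {1..int n} \<subseteq> int ` ?S"
    proof
      fix x assume x: "x \<in> V \<inter> {1..int n}"
      then have "nat x \<in> ?S" by auto
      then show "x \<in> int ` ?S" using x by force
    qed
  qed auto
  have "inj_on int ?S" by (simp add: inj_on_def)
  from card_image[OF this] show ?thesis unfolding image by simp
qed

lemma involution_image_eq:
  assumes "\<forall>x\<in>I. S x \<in> I" "\<forall>x\<in>I. S (S x) = x"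
  shows "S ` I = I"
  using assms by (auto simp: image_iff) metis

lemma lab_in_gap:
  assumes "1 \<le> i" "i < j" "j \<le> n" "int j - int n < y" "y < int i"
  shows "lab n y \<notin> {i..j}"
proof (cases "1 \<le> y")
  case True
  then show ?thesis using lab_eq_nat[of y n] assms by simp
next
  case False
  then have "lab n y = nat (y + int n)"
    using lab_add[of n y] lab_eq_nat[of "y + int n" n] assms by simp
  then have "int (lab n y) = y + int n" using assms by simp
  then show ?thesis using assms by auto
qed

text \<open>One row of a diagram with a vertical edge: \<open>V\<close> is the set of positions of the
  vertical edges, and \<open>P\<close> pairs up the remaining positions by non-crossing arcs, none of
  which passes over a vertical edge.\<close>

definition row_matching :: "nat \<Rightarrow> int set \<Rightarrow> (int \<Rightarrow> int) \<Rightarrow> bool" where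
  "row_matching n V P \<longleftrightarrow> periodic n V \<and> V \<noteq> {} \<and> (\<forall>k. P (k + int n) = P k + int n) \<and>
     (\<forall>k. k \<notin> V \<longrightarrow> P k \<notin> V \<and> P (P k) = k \<and> P k \<noteq> k) \<and>
     (\<forall>k v. k \<notin> V \<longrightarrow> v \<in> V \<longrightarrow> \<not> (k < v \<and> v < P k)) \<and>
     (\<forall>k l. k \<notin> V \<longrightarrow> l \<notin> V \<longrightarrow> \<not> (k < l \<and> l < P k \<and> P k < P l))"

definition matching_inv :: "nat \<Rightarrow> int set \<Rightarrow> (int \<Rightarrow> int) \<Rightarrow> nat \<Rightarrow> nat" where
  "matching_inv n V P i = (if i \<in> {1..n} \<and> int i \<notin> V then lab n (P (int i)) else i)"

context
  fixes n :: nat and V :: "int set" and P :: "int \<Rightarrow> int"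
  assumes n: "n > 0" and row: "row_matching n V P"
begin

lemma periodic_vertical: "periodic n V"
  using row unfolding row_matching_def by blast

lemma vertical_nonempty: "V \<noteq> {}"
  using row unfolding row_matching_def by blast

lemma partner_add_mult: "P (k + q * int n) = P k + q * int n"
  using row add_mult_shift[of P "int n" "int n"] unfolding row_matching_def by blast

lemma partner_not_vertical: "k \<notin> V \<Longrightarrow> P k \<notin> V"
  using row unfolding row_matching_def by blast

lemma partner_partner: "k \<notin> V \<Longrightarrow> P (P k) = k"
  using row unfolding row_matching_def by blast

lemma partner_neq: "k \<notin> V \<Longrightarrow> P k \<noteq> k"
  using row unfolding row_matching_def by blast

lemma arc_not_over_vertical: "k \<notin> V \<Longrightarrow> v \<in> V \<Longrightarrow> k < v \<Longrightarrow> v < P k \<Longrightarrow> False"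
  using row unfolding row_matching_def by blast

lemma arc_not_over_vertical': "k \<notin> V \<Longrightarrow> v \<in> V \<Longrightarrow> P k < v \<Longrightarrow> v < k \<Longrightarrow> False"
  using arc_not_over_vertical[of "P k" v] partner_not_vertical partner_partner by metis

lemma arcs_not_crossing:
  "k \<notin> V \<Longrightarrow> l \<notin> V \<Longrightarrow> k < l \<Longrightarrow> l < P k \<Longrightarrow> P k < P l \<Longrightarrow> False"
  using row unfolding row_matching_def by blast

lemma lab_partner_neq:
  assumes k: "k \<notin> V"
  shows "lab n (P k) \<noteq> lab n k"
proof
  assume "lab n (P k) = lab n k"
  then have "P k mod int n = k mod int n" using lab_eq_iff[OF n] by simp
  then obtain q where q: "P k = k + q * int n"
    by (metis mod_eq_dvd_iff dvd_def mult.commute add_diff_cancel_left' diff_add_cancel)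
  have "P (P k) = P k + q * int n" using partner_add_mult[of k q] q by simp
  then have "k = k + 2 * q * int n" using partner_partner[OF k] q by simp
  then have "q = 0" using n by simp
  then show False using q partner_neq[OF k] by simp
qed

lemma partner_less:
  assumes k: "k \<notin> V"
  shows "P k < k + int n"
proof (rule ccontr)
  assume "\<not> P k < k + int n"
  moreover have "P k \<noteq> k + int n"
    using lab_partner_neq[OF k] lab_add[of n k] by metis
  ultimately have gt: "k + int n < P k" by simp
  obtain v where v: "v \<in> V" "k + 1 \<le> v" "v < k + 1 + int n"
    using periodic_obtain_in_window[OF n periodic_vertical vertical_nonempty] .
  then have "k < v" "v < P k" using gt by auto
  then show False using arc_not_over_vertical[OF k v(1)] by blast
qed

lemma partner_greater: "k \<notin> V \<Longrightarrow> k < P k + int n"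
  using partner_less[of "P k"] partner_not_vertical partner_partner by simp

lemma inside_arc_nested:
  assumes a: "a \<notin> V" and ax: "a < x" "x < P a"
  shows "x \<notin> V \<and> a < P x \<and> P x < P a"
proof -
  have x: "x \<notin> V" using arc_not_over_vertical[OF a] ax by blast
  have "P x \<noteq> a" using partner_partner[OF x] ax by auto
  moreover have "P x \<noteq> P a"
  proof
    assume "P x = P a"
    then have "x = a" using partner_partner[OF x] partner_partner[OF a] by metis
    then show False using ax by simp
  qed
  moreover have "\<not> P a < P x" using arcs_not_crossing[OF a x] ax by blast
  moreover have "\<not> P x < a"
    using arcs_not_crossing[OF partner_not_vertical[OF x] a] ax partner_partner[OF x] by auto
  ultimately show ?thesis using x by auto
qed

lemma matching_inv_lab:
  assumes k: "k \<notin> V"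
  shows "matching_inv n V P (lab n k) = lab n (P k)"
proof -
  have l: "lab n k \<in> {1..n}" using lab_bounds[OF n] .
  have lk: "int (lab n k) \<notin> V" using periodic_lab_iff[OF n periodic_vertical] k by simp
  have "P k = P (int (lab n k)) + (k - 1) div int n * int n"
    using partner_add_mult lab_decomp[OF n, of k] by metis
  then have "lab n (P k) = lab n (P (int (lab n k)))" using lab_add_mult by simp
  then show ?thesis unfolding matching_inv_def using l lk by simp
qed

lemma matching_inv_fixed_iff:
  assumes i: "i \<in> {1..n}"
  shows "matching_inv n V P i = i \<longleftrightarrow> int i \<in> V"
  using lab_partner_neq[of "int i"] lab_of_nat[OF i] i unfolding matching_inv_def by auto

lemma fixpts_matching_inv: "fixpts n (matching_inv n V P) = {i \<in> {1..n}. int i \<in> V}"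
  unfolding fixpts_def using matching_inv_fixed_iff by auto

lemma matching_inv_involution: "matching_inv n V P \<in> involutions n"
proof -
  let ?S = "matching_inv n V P"
  have "?S i \<in> {1..n} \<and> ?S (?S i) = i" if i: "i \<in> {1..n}" for i
  proof (cases "int i \<in> V")
    case True
    then show ?thesis unfolding matching_inv_def using i by simp
  next
    case False
    have Si: "?S i = lab n (P (int i))" unfolding matching_inv_def using i False by simp
    have "?S (?S i) = lab n (int i)"
      using matching_inv_lab[OF partner_not_vertical[OF False]] partner_partner[OF False] Si by simp
    then show ?thesis using Si lab_bounds[OF n] lab_of_nat[OF i] by simp
  qed
  moreover have "?S i = i" if "i \<notin> {1..n}" for i
    unfolding matching_inv_def using that by auto
  ultimately show ?thesis unfolding involutions_def by blast
qed

lemma matching_inv_Inv_t: "matching_inv n V P \<in> Inv_t n (card (V \<inter> {1..int n}))"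
  unfolding Inv_t_def
  using matching_inv_involution fixpts_matching_inv card_int_filter_Icc by simp

lemma partner_of_lab_eq:
  assumes "int i \<notin> V" and "lab n (P (int i)) = j" and "j \<in> {1..n}" and "i \<in> {1..n}"
    and "i < j"
  shows "P (int i) = int j \<or> P (int i) = int j - int n"
proof -
  let ?p = "P (int i)"
  have mod_p: "?p mod int n = int j mod int n" using int_lab_eq_iff[OF n, of ?p "int j"] assms by simp
  have "?p \<noteq> int i" using partner_neq assms(1) by blast
  then consider "int i < ?p" | "?p < int i" by linarith
  then show ?thesis
  proof cases
    case 1
    then have "\<bar>?p - int j\<bar> < int n" using partner_less[OF assms(1)] assms(3-5) by auto
    then show ?thesis using eq_if_mod_eq_dist_less[OF mod_p] by simp
  next
    case 2
    have "?p mod int n = (int j - int n) mod int n" using mod_p by (simp add: mod_diff_right_eq)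
    moreover have "\<bar>?p - (int j - int n)\<bar> < int n"
      using 2 partner_greater[OF assms(1)] assms(3-5) by auto
    ultimately show ?thesis using eq_if_mod_eq_dist_less by blast
  qed
qed

lemma matching_inv_interval_inner:
  assumes i: "i \<in> {1..n}" and j: "j \<in> {1..n}" and ij: "i < j"
    and iV: "int i \<notin> V" and Pi: "P (int i) = int j"
  shows "\<forall>x\<in>{i..j}. matching_inv n V P x \<in> {i..j}"
    and "{i..j} \<inter> fixpts n (matching_inv n V P) = {}"
proof -
  let ?S = "matching_inv n V P"
  have jV: "int j \<notin> V" using partner_not_vertical[OF iV] Pi by simp
  have Sij: "?S i = j" unfolding matching_inv_def using i iV Pi lab_of_nat[OF j] by simp
  have Sji: "?S j = i"
    unfolding matching_inv_def using j jV partner_partner[OF iV] Pi lab_of_nat[OF i] by simp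
  have inner: "int x \<notin> V \<and> ?S x \<in> {i<..<j}" if "i < x" "x < j" for x
  proof -
    have x: "int x \<notin> V \<and> int i < P (int x) \<and> P (int x) < int j"
      using inside_arc_nested[OF iV, of "int x"] that Pi by simp
    moreover have "x \<in> {1..n}" using that i j by simp
    ultimately have "?S x = nat (P (int x))"
      using lab_eq_nat[of "P (int x)" n] i j unfolding matching_inv_def by simp
    then show ?thesis using x by auto
  qed
  show "\<forall>x\<in>{i..j}. ?S x \<in> {i..j}"
  proof
    fix x assume "x \<in> {i..j}"
    then consider "x = i" | "x = j" | "i < x \<and> x < j" by fastforce
    then show "?S x \<in> {i..j}"
    proof cases
      case 1
      then show ?thesis using Sij ij by simp
    next
      case 2
      then show ?thesis using Sji ij by simp
    next
      case 3
      then show ?thesis using inner[of x] by auto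
    qed
  qed
  have "int x \<notin> V" if "x \<in> {i..j}" for x
    using that iV jV inner[of x] by (cases "x = i \<or> x = j") auto
  then show "{i..j} \<inter> fixpts n ?S = {}" unfolding fixpts_matching_inv by auto
qed

lemma matching_inv_interval_wrapping:
  assumes i: "i \<in> {1..n}" and j: "j \<in> {1..n}" and ij: "i < j"
    and iV: "int i \<notin> V" and Pi: "P (int i) = int j - int n"
  shows "\<forall>x\<in>{i..j}. matching_inv n V P x \<in> {i..j}"
    and "fixpts n (matching_inv n V P) \<subseteq> {i..j}"
proof -
  let ?S = "matching_inv n V P"
  define p where "p = P (int i)"
  have pV: "p \<notin> V" and Pp: "P p = int i"
    unfolding p_def using partner_not_vertical[OF iV] partner_partner[OF iV] .
  have outer: "int x \<notin> V \<and> ?S x \<notin> {i..j}" if x: "x \<in> {1..n}" "x \<notin> {i..j}" for x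
  proof -
    define y where "y = (if x < i then int x else int x - int n)"
    have "p < y" "y < P p" using x Pi Pp i j unfolding y_def p_def by auto
    then have y: "y \<notin> V" "p < P y" "P y < int i" using inside_arc_nested[OF pV] Pp by auto
    have lab_y: "lab n y = x"
      using lab_of_nat[OF x(1)] lab_add[of n "int x - int n"] unfolding y_def by simp
    have "int x \<notin> V" using periodic_lab_iff[OF n periodic_vertical, of y] y(1) lab_y by simp
    moreover have "?S x = lab n (P y)" using matching_inv_lab[OF y(1)] lab_y by simp
    moreover have "lab n (P y) \<notin> {i..j}"
      using lab_in_gap[of i j n "P y"] y Pi i j ij unfolding p_def by simp
    ultimately show ?thesis by simp
  qed
  have S_range: "?S x \<in> {1..n}" and SS: "?S (?S x) = x" if "x \<in> {1..n}" for x
    using matching_inv_involution that unfolding involutions_def by auto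
  show "\<forall>x\<in>{i..j}. ?S x \<in> {i..j}"
  proof
    fix x assume x: "x \<in> {i..j}"
    then have x_range: "x \<in> {1..n}" using i j by auto
    show "?S x \<in> {i..j}"
    proof (rule ccontr)
      assume "?S x \<notin> {i..j}"
      then have "?S (?S x) \<notin> {i..j}" using outer[OF S_range[OF x_range]] by blast
      then show False using SS[OF x_range] x by simp
    qed
  qed
  show "fixpts n ?S \<subseteq> {i..j}"
  proof
    fix x assume "x \<in> fixpts n ?S"
    then have "x \<in> {1..n}" "int x \<in> V" unfolding fixpts_matching_inv by auto
    then show "x \<in> {i..j}" using outer[of x] by blast
  qed
qed

lemma matching_inv_interval:
  assumes i: "i \<in> {1..n}" and j: "j \<in> {1..n}" and ij: "i < j"
    and Sij: "matching_inv n V P i = j"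
  shows "matching_inv n V P ` {i..j} = {i..j} \<and>
    ({i..j} \<inter> fixpts n (matching_inv n V P) = {} \<or> fixpts n (matching_inv n V P) \<subseteq> {i..j})"
proof -
  have iV: "int i \<notin> V" using Sij ij unfolding matching_inv_def by auto
  have "lab n (P (int i)) = j" using Sij iV i unfolding matching_inv_def by simp
  then have "P (int i) = int j \<or> P (int i) = int j - int n"
    using partner_of_lab_eq[OF iV _ j i ij] by simp
  moreover have "\<forall>x\<in>{i..j}. matching_inv n V P (matching_inv n V P x) = x"
    using matching_inv_involution i j unfolding involutions_def by auto
  ultimately show ?thesis
    using matching_inv_interval_inner[OF i j ij iV] matching_inv_interval_wrapping[OF i j ij iV]
      involution_image_eq[of "{i..j}" "matching_inv n V P"] by blast
qed

lemma matching_inv_annular: "matching_inv n V P \<in> Ann n"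
  unfolding Ann_def using matching_inv_involution matching_inv_interval by blast

end

lemma partner_le_if_lab_eq:
  assumes n: "n > 0" and row: "row_matching n V P" and row': "row_matching n V P'"
    and k: "k \<notin> V" and lab_eq: "lab n (P k) = lab n (P' k)"
  shows "P k \<le> P' k"
proof (rule ccontr)
  assume "\<not> P k \<le> P' k"
  moreover have "P k mod int n = P' k mod int n" using lab_eq lab_eq_iff[OF n] by simp
  ultimately have far: "P' k + int n \<le> P k"
    using eq_if_mod_eq_dist_less[of "P k" "int n" "P' k"] by fastforce
  obtain v where v: "v \<in> V" "P' k + 1 \<le> v" "v < P' k + 1 + int n"
    using periodic_obtain_in_window[OF n periodic_vertical[OF n row] vertical_nonempty[OF n row]] .
  have "v \<noteq> k" "v \<noteq> P k" using k v(1) partner_not_vertical[OF n row k] by auto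
  then show False
    using arc_not_over_vertical[OF n row k v(1)] arc_not_over_vertical'[OF n row' k v(1)] v far
    by linarith
qed

lemma partner_unique:
  assumes "n > 0" "row_matching n V P" "row_matching n V P'" "k \<notin> V"
    and "lab n (P k) = lab n (P' k)"
  shows "P k = P' k"
  using partner_le_if_lab_eq[of n V P P' k] partner_le_if_lab_eq[of n V P' P k] assms
  by fastforce

section \<open>Lifting an annular involution to a row\<close>

lemma involutionsD:
  assumes "A \<in> involutions n"
  shows "i \<in> {1..n} \<Longrightarrow> A i \<in> {1..n}" "i \<in> {1..n} \<Longrightarrow> A (A i) = i"
    "i \<notin> {1..n} \<Longrightarrow> A i = i"
  using assms unfolding involutions_def by auto

lemma Ann_involution: "A \<in> Ann n \<Longrightarrow> A \<in> involutions n"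
  unfolding Ann_def by simp

lemma involution_maps_outside:
  assumes "A \<in> involutions n" "A ` I = I" "y \<in> {1..n}" "y \<notin> I"
  shows "A y \<notin> I"
  using assms involutionsD(2)[OF assms(1)] by (metis imageI)

definition no_fixpt_between :: "nat \<Rightarrow> (nat \<Rightarrow> nat) \<Rightarrow> nat \<Rightarrow> nat \<Rightarrow> bool" where
  "no_fixpt_between n A i j \<longleftrightarrow> {min i j..max i j} \<inter> fixpts n A = {}"

lemma Ann_pair:
  assumes A: "A \<in> Ann n" and i: "i \<in> {1..n}" and ij: "A i \<noteq> i"
  shows "A ` {min i (A i)..max i (A i)} = {min i (A i)..max i (A i)} \<and>
    (no_fixpt_between n A i (A i) \<or> fixpts n A \<subseteq> {min i (A i)..max i (A i)})"
proof -
  have j: "A i \<in> {1..n}" and Aj: "A (A i) = i"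
    using involutionsD(1,2)[OF Ann_involution[OF A] i] by auto
  have ann: "A ` {a..b} = {a..b} \<and> ({a..b} \<inter> fixpts n A = {} \<or> fixpts n A \<subseteq> {a..b})"
    if "a \<in> {1..n}" "b \<in> {1..n}" "a < b" "A a = b" for a b
    using A that unfolding Ann_def by blast
  show ?thesis
  proof (cases "i < A i")
    case True
    then show ?thesis using ann[OF i j True] unfolding no_fixpt_between_def by simp
  next
    case False
    then have "A i < i" using ij by simp
    then show ?thesis using ann[OF j i _ Aj] unfolding no_fixpt_between_def
      by (simp add: min_def max_def)
  qed
qed

lemma no_fixpt_between_iff_same_side:
  assumes fix_inside: "fixpts n A \<subseteq> {j..i}" and "fixpts n A \<noteq> {}"
    and y: "y \<notin> {j..i}" and z: "z \<notin> {j..i}"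
  shows "no_fixpt_between n A y z \<longleftrightarrow> (i < y \<longleftrightarrow> i < z)"
proof
  assume free: "no_fixpt_between n A y z"
  obtain f where f: "f \<in> fixpts n A" using assms(2) by auto
  show "i < y \<longleftrightarrow> i < z"
  proof (rule ccontr)
    assume "\<not> (i < y \<longleftrightarrow> i < z)"
    then have "f \<in> {min y z..max y z}" using fix_inside f y z by (auto simp: min_def max_def)
    then show False using free f unfolding no_fixpt_between_def by blast
  qed
next
  assume "i < y \<longleftrightarrow> i < z"
  then have "{min y z..max y z} \<inter> {j..i} = {}" using y z by (auto simp: min_def max_def)
  then show "no_fixpt_between n A y z" using fix_inside unfolding no_fixpt_between_def by blast
qed

lemma lab_in_wrapping_interval:
  assumes "1 \<le> j" "j \<le> i" "i \<le> n" "int i < x" "x < int j + int n"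
  shows "(i < lab n x \<and> x = int (lab n x)) \<or> (lab n x < j \<and> x = int (lab n x) + int n)"
proof (cases "x \<le> int n")
  case True
  then show ?thesis using lab_eq_nat[of x n] assms by simp
next
  case False
  then have "lab n x = nat (x - int n)"
    using lab_eq_nat[of "x - int n" n] lab_add[of n "x - int n"] assms by simp
  then show ?thesis using False assms by simp
qed

text \<open>An arc between \<open>i\<close> and \<open>A i\<close> that encloses no fixed point is drawn inside the window
  \<open>{1..n}\<close>; one that encloses all fixed points is drawn around them, so its lift leaves the
  window by \<open>wrap\<close>.\<close>

definition wrap :: "nat \<Rightarrow> (nat \<Rightarrow> nat) \<Rightarrow> nat \<Rightarrow> int" where
  "wrap n A i = (if no_fixpt_between n A i (A i) then 0 else if i < A i then - int n else int n)"

definition arc_lift :: "nat \<Rightarrow> (nat \<Rightarrow> nat) \<Rightarrow> int \<Rightarrow> int" where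
  "arc_lift n A k = k - int (lab n k) + int (A (lab n k)) + wrap n A (lab n k)"

definition fixed_lift :: "nat \<Rightarrow> (nat \<Rightarrow> nat) \<Rightarrow> int set" where
  "fixed_lift n A = {k. A (lab n k) = lab n k}"

lemma arc_lift_add_mult: "arc_lift n A (k + q * int n) = arc_lift n A k + q * int n"
  unfolding arc_lift_def using lab_add_mult[of n k q] by simp

lemma arc_lift_of_nat:
  "y \<in> {1..n} \<Longrightarrow> arc_lift n A (int y + q * int n) = int (A y) + wrap n A y + q * int n"
  using arc_lift_add_mult[of n A "int y" q] lab_of_nat[of y n] unfolding arc_lift_def by simp

lemma periodic_fixed_lift: "periodic n (fixed_lift n A)"
  unfolding periodic_def fixed_lift_def using lab_add by simp

lemma of_nat_in_fixed_lift_iff: "i \<in> {1..n} \<Longrightarrow> int i \<in> fixed_lift n A \<longleftrightarrow> A i = i"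
  unfolding fixed_lift_def using lab_of_nat by simp

lemma lab_arc_lift:
  assumes n: "n > 0" and A: "A \<in> involutions n"
  shows "lab n (arc_lift n A k) = A (lab n k)"
proof -
  let ?i = "lab n k"
  have j: "A ?i \<in> {1..n}" using involutionsD(1)[OF A lab_bounds[OF n]] .
  have "int n dvd k - int ?i" using lab_mod[OF n, of k, symmetric] by (simp add: mod_eq_dvd_iff)
  moreover have "int n dvd wrap n A ?i" unfolding wrap_def by auto
  moreover have "arc_lift n A k - int (A ?i) = (k - int ?i) + wrap n A ?i"
    unfolding arc_lift_def by simp
  ultimately have "arc_lift n A k mod int n = int (A ?i) mod int n"
    by (metis dvd_add mod_eq_dvd_iff)
  then show ?thesis using int_lab_eq_iff[OF n, of "arc_lift n A k" "int (A ?i)"] j by simp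
qed

context
  fixes n :: nat and A :: "nat \<Rightarrow> nat"
  assumes n: "n > 0" and A: "A \<in> Ann n" and has_fixpt: "fixpts n A \<noteq> {}"
begin

lemma arc_lift_inside_inner:
  assumes i: "i \<in> {1..n}" and lt: "i < A i" and free: "no_fixpt_between n A i (A i)"
    and x: "int i < x" "x < int (A i)"
  shows "x \<notin> fixed_lift n A \<and> int i < arc_lift n A x \<and> arc_lift n A x < int (A i)"
proof -
  define j where "j = A i"
  have inv: "A \<in> involutions n" using Ann_involution[OF A] .
  have j: "j \<in> {1..n}" and Aj: "A j = i" using involutionsD(1,2)[OF inv i] unfolding j_def by auto
  have image: "A ` {i..j} = {i..j}" and no_fix: "{i..j} \<inter> fixpts n A = {}"
    using Ann_pair[OF A i] lt free unfolding j_def no_fixpt_between_def by auto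
  define y where "y = nat x"
  have y: "y \<in> {1..n}" "x = int y" "i < y" "y < j" using x i j unfolding y_def j_def by auto
  have "y \<in> {i..j}" using y(3,4) by simp
  then have "y \<notin> fixpts n A" using no_fix by blast
  then have "A y \<noteq> y" using y(1) unfolding fixpts_def by simp
  then have "x \<notin> fixed_lift n A" using of_nat_in_fixed_lift_iff[OF y(1)] y(2) by simp
  moreover have Ay: "i < A y" "A y < j"
  proof -
    have "A y \<in> {i..j}" using image y by auto
    moreover have "A (A y) = y" using involutionsD(2)[OF inv y(1)] .
    then have "A y \<noteq> i" "A y \<noteq> j" using y(3,4) Aj unfolding j_def by auto
    ultimately show "i < A y" "A y < j" by auto
  qed
  moreover have "{min y (A y)..max y (A y)} \<subseteq> {i..j}" using y Ay by auto
  then have "no_fixpt_between n A y (A y)" using no_fix unfolding no_fixpt_between_def by blast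
  then have "arc_lift n A x = int (A y)"
    using arc_lift_of_nat[OF y(1), of A 0] y(2) unfolding wrap_def by simp
  ultimately show ?thesis unfolding j_def by simp
qed

lemma arc_lift_inside_wrapping:
  assumes i: "i \<in> {1..n}" and lt: "A i < i" and not_free: "\<not> no_fixpt_between n A i (A i)"
    and x: "int i < x" "x < int (A i) + int n"
  shows "x \<notin> fixed_lift n A \<and> int i < arc_lift n A x \<and> arc_lift n A x < int (A i) + int n"
proof -
  define j where "j = A i"
  have inv: "A \<in> involutions n" using Ann_involution[OF A] .
  have j: "j \<in> {1..n}" using involutionsD(1,2)[OF inv i] unfolding j_def by auto
  have image: "A ` {j..i} = {j..i}" and fix_inside: "fixpts n A \<subseteq> {j..i}"
    using Ann_pair[OF A i] lt not_free unfolding j_def by (auto simp: min_def max_def)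
  define y where "y = lab n x"
  have y: "y \<in> {1..n}" using lab_bounds[OF n] unfolding y_def .
  have side: "(i < y \<and> x = int y) \<or> (y < j \<and> x = int y + int n)"
    using lab_in_wrapping_interval[of j i n x] i j lt x unfolding y_def j_def by simp
  then have y_out: "y \<notin> {j..i}" by auto
  then have "A y \<noteq> y" using fix_inside y unfolding fixpts_def by auto
  then have x_free: "x \<notin> fixed_lift n A" unfolding fixed_lift_def y_def by simp
  have Ay: "A y \<in> {1..n}" "A y \<notin> {j..i}"
    using involutionsD(1)[OF inv y] involution_maps_outside[OF inv image y y_out] by auto
  have "no_fixpt_between n A y (A y) \<longleftrightarrow> (i < y \<longleftrightarrow> i < A y)"
    using no_fixpt_between_iff_same_side[OF fix_inside has_fixpt y_out Ay(2)] .
  then have "wrap n A y = (if i < y then 0 else - int n) - (if i < A y then 0 else - int n)"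
    using y_out Ay(2) lt unfolding wrap_def j_def by auto
  moreover have "x = int y + (if i < y then 0 else 1) * int n" using side lt unfolding j_def by auto
  ultimately have "arc_lift n A x = int (A y) + (if i < A y then 0 else int n)"
    using arc_lift_of_nat[OF y, of A "if i < y then 0 else 1"] by simp
  then show ?thesis using x_free Ay side i j unfolding j_def by auto
qed

lemma arc_lift_inside:
  assumes k: "k \<notin> fixed_lift n A" and lt: "k < arc_lift n A k" and x: "k < x" "x < arc_lift n A k"
  shows "x \<notin> fixed_lift n A \<and> k < arc_lift n A x \<and> arc_lift n A x < arc_lift n A k"
proof -
  define i where "i = lab n k"
  define q where "q = (k - 1) div int n"
  have kq: "k = int i + q * int n" unfolding i_def q_def by (rule lab_decomp[OF n])
  have i: "i \<in> {1..n}" unfolding i_def using lab_bounds[OF n] .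
  have Ai: "A i \<noteq> i" using k unfolding fixed_lift_def i_def by simp
  have shift: "arc_lift n A (z + q * int n) = arc_lift n A z + q * int n" for z
    by (rule arc_lift_add_mult)
  define x' where "x' = x - q * int n"
  have xx: "x = x' + q * int n" unfolding x'_def by simp
  have Pi: "arc_lift n A (int i) = int (A i) + wrap n A i"
    using arc_lift_of_nat[OF i, of A 0] by simp
  have lt': "int i < arc_lift n A (int i)" and x': "int i < x'" "x' < arc_lift n A (int i)"
    using lt x shift[of "int i"] kq unfolding x'_def by simp_all
  have base: "x' \<notin> fixed_lift n A \<and> int i < arc_lift n A x' \<and> arc_lift n A x' < arc_lift n A (int i)"
  proof (cases "no_fixpt_between n A i (A i)")
    case True
    then have "arc_lift n A (int i) = int (A i)" using Pi unfolding wrap_def by simp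
    then show ?thesis using arc_lift_inside_inner[OF i _ True] lt' x' by simp
  next
    case False
    then have "A i < i"
      using lt' Pi Ai involutionsD(1)[OF Ann_involution[OF A] i] unfolding wrap_def
      by (auto split: if_splits)
    then have "arc_lift n A (int i) = int (A i) + int n" using Pi False unfolding wrap_def by simp
    then show ?thesis using arc_lift_inside_wrapping[OF i \<open>A i < i\<close> False] x' by simp
  qed
  have "x \<notin> fixed_lift n A" using base periodic_add_mult[OF periodic_fixed_lift, of x' q] xx by simp
  then show ?thesis using base shift[of x'] shift[of "int i"] xx kq by simp
qed

lemma row_matching_arc_lift: "row_matching n (fixed_lift n A) (arc_lift n A)"
proof -
  let ?V = "fixed_lift n A" and ?P = "arc_lift n A"
  have inv: "A \<in> involutions n" using Ann_involution[OF A] .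
  obtain f where "f \<in> fixpts n A" using has_fixpt by auto
  then have "int f \<in> ?V" using of_nat_in_fixed_lift_iff unfolding fixpts_def by simp
  then have nonempty: "?V \<noteq> {}" by auto
  have arc: "?P k \<notin> ?V \<and> ?P (?P k) = k \<and> ?P k \<noteq> k" if k: "k \<notin> ?V" for k
  proof -
    define i where "i = lab n k"
    define j where "j = A i"
    have j: "A j = i" and ij: "i \<noteq> j"
      using involutionsD(2)[OF inv lab_bounds[OF n]] k unfolding fixed_lift_def i_def j_def by auto
    have lab_Pk: "lab n (?P k) = j" unfolding j_def i_def by (rule lab_arc_lift[OF n inv])
    have "wrap n A i + wrap n A j = 0"
      using ij j unfolding wrap_def no_fixpt_between_def j_def by (auto simp: min.commute max.commute)
    then have "?P (?P k) = k" unfolding arc_lift_def[of n A "?P k"] lab_Pk j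
      unfolding arc_lift_def i_def j_def by simp
    then show ?thesis using lab_Pk ij j i_def unfolding fixed_lift_def by auto
  qed
  have over: "\<not> (k < v \<and> v < ?P k)" if "k \<notin> ?V" "v \<in> ?V" for k v
    using arc_lift_inside[OF that(1), of v] that(2) by auto
  have cross: "\<not> (k < l \<and> l < ?P k \<and> ?P k < ?P l)" if "k \<notin> ?V" "l \<notin> ?V" for k l
    using arc_lift_inside[OF that(1), of l] by auto
  show ?thesis unfolding row_matching_def
    using periodic_fixed_lift nonempty arc_lift_add_mult[of n A _ 1] arc over cross by simp
qed

lemma matching_inv_arc_lift: "matching_inv n (fixed_lift n A) (arc_lift n A) = A"
proof
  fix i
  have inv: "A \<in> involutions n" using Ann_involution[OF A] .
  show "matching_inv n (fixed_lift n A) (arc_lift n A) i = A i"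
  proof (cases "i \<in> {1..n}")
    case True
    then show ?thesis unfolding matching_inv_def
      using of_nat_in_fixed_lift_iff lab_arc_lift[OF n inv, of "int i"] lab_of_nat by simp
  next
    case False
    then show ?thesis unfolding matching_inv_def using involutionsD(3)[OF inv False] by auto
  qed
qed

end

lemma fixed_lift_matching_inv:
  assumes n: "n > 0" and row: "row_matching n V P"
  shows "fixed_lift n (matching_inv n V P) = V"
  unfolding fixed_lift_def
  using matching_inv_fixed_iff[OF n row lab_bounds[OF n]] periodic_lab_iff[OF n periodic_vertical[OF n row]]
  by auto

lemma arc_lift_matching_inv:
  assumes n: "n > 0" and row: "row_matching n V P" and k: "k \<notin> V"
  shows "arc_lift n (matching_inv n V P) k = P k"
proof -
  let ?S = "matching_inv n V P"
  have ann: "?S \<in> Ann n" by (rule matching_inv_annular[OF n row])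
  have "card (fixpts n ?S) > 0"
    using fixpts_matching_inv[OF n row] card_int_filter_Icc[of n V]
      card_window_pos[OF n periodic_vertical[OF n row] vertical_nonempty[OF n row]] by simp
  then have "fixpts n ?S \<noteq> {}" by auto
  then have row': "row_matching n V (arc_lift n ?S)"
    using row_matching_arc_lift[OF n ann] fixed_lift_matching_inv[OF n row] by simp
  have "lab n (arc_lift n ?S k) = lab n (P k)"
    using lab_arc_lift[OF n Ann_involution[OF ann]] matching_inv_lab[OF n row k] by simp
  then show ?thesis using partner_unique[OF n row' row k] by simp
qed

section \<open>The rows and the winding number of a diagram\<close>

definition vertical_pos :: "bool \<Rightarrow> (node \<Rightarrow> node) \<Rightarrow> int set" where
  "vertical_pos b m = {k. snd (m (k, b)) \<noteq> b}"

definition edge_end :: "bool \<Rightarrow> (node \<Rightarrow> node) \<Rightarrow> int \<Rightarrow> int" where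
  "edge_end b m k = fst (m (k, b))"

lemma S1_eq_matching_inv: "S1 n m = matching_inv n (vertical_pos True m) (edge_end True m)"
  unfolding S1_def row_inv_def matching_inv_def vertical_pos_def edge_end_def by auto

lemma S2_eq_matching_inv: "S2 n m = matching_inv n (vertical_pos False m) (edge_end False m)"
  unfolding S2_def row_inv_def matching_inv_def vertical_pos_def edge_end_def by auto

lemma diagrams_vertD:
  assumes "m \<in> diagrams_vert n"
  shows "m (m x) = x" "m x \<noteq> x"
    "m (k + int n, b) = (fst (m (k, b)) + int n, snd (m (k, b)))"
    "bnd_less a c \<Longrightarrow> bnd_less c (m a) \<Longrightarrow> bnd_less (m a) (m c) \<Longrightarrow> False"
    "\<exists>x. snd (m x) \<noteq> snd x"
  using assms unfolding diagrams_vert_def is_affine_diagram_matching_def has_vertical_edge_def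
  by blast+

lemma edge_in_row: "k \<notin> vertical_pos b m \<Longrightarrow> m (k, b) = (edge_end b m k, b)"
  unfolding vertical_pos_def edge_end_def by (cases "m (k, b)") auto

lemma edge_vertical: "k \<in> vertical_pos b m \<Longrightarrow> m (k, b) = (edge_end b m k, \<not> b)"
  unfolding vertical_pos_def edge_end_def by (cases "m (k, b)") auto

lemma edge_end_vertical:
  assumes D: "m \<in> diagrams_vert n" and k: "k \<in> vertical_pos b m"
  shows "edge_end b m k \<in> vertical_pos (\<not> b) m" "edge_end (\<not> b) m (edge_end b m k) = k"
proof -
  have "m (edge_end b m k, \<not> b) = (k, b)"
    using diagrams_vertD(1)[OF D, of "(k, b)"] edge_vertical[OF k] by simp
  then show "edge_end b m k \<in> vertical_pos (\<not> b) m" "edge_end (\<not> b) m (edge_end b m k) = k"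
    unfolding vertical_pos_def edge_end_def by simp_all
qed

lemma diagram_arc_not_over_vertical:
  assumes D: "m \<in> diagrams_vert n" and k: "k \<notin> vertical_pos b m" and v: "v \<in> vertical_pos b m"
  shows "\<not> (k < v \<and> v < edge_end b m k)"
proof
  assume h: "k < v \<and> v < edge_end b m k"
  let ?P = "edge_end b m"
  note d = diagrams_vertD[OF D]
  have mk: "m (k, b) = (?P k, b)" using edge_in_row[OF k] .
  have mPk: "m (?P k, b) = (k, b)" using d(1)[of "(k, b)"] mk by simp
  have mv: "m (?P v, \<not> b) = (v, b)" using d(1)[of "(v, b)"] edge_vertical[OF v] by simp
  show False
  proof (cases b)
    case True
    then show False using d(4)[of "(?P v, False)" "(?P k, True)"] mv mPk h
      unfolding bnd_less_def by simp
  next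
    case False
    then show False using d(4)[of "(k, False)" "(v, False)"] edge_vertical[OF v] mk h
      unfolding bnd_less_def by simp
  qed
qed

lemma diagram_arcs_not_crossing:
  assumes D: "m \<in> diagrams_vert n" and k: "k \<notin> vertical_pos b m" and l: "l \<notin> vertical_pos b m"
  shows "\<not> (k < l \<and> l < edge_end b m k \<and> edge_end b m k < edge_end b m l)"
proof
  assume h: "k < l \<and> l < edge_end b m k \<and> edge_end b m k < edge_end b m l"
  let ?P = "edge_end b m"
  note d = diagrams_vertD[OF D]
  have mPk: "m (?P k, b) = (k, b)" using d(1)[of "(k, b)"] edge_in_row[OF k] by simp
  have mPl: "m (?P l, b) = (l, b)" using d(1)[of "(l, b)"] edge_in_row[OF l] by simp
  show False
  proof (cases b)
    case True
    then show False using d(4)[of "(?P l, True)" "(?P k, True)"] mPk mPl h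
      unfolding bnd_less_def by simp
  next
    case False
    then show False using d(4)[of "(k, False)" "(l, False)"] edge_in_row[OF k] edge_in_row[OF l] h
      unfolding bnd_less_def by simp
  qed
qed

lemma row_matching_diagram:
  assumes D: "m \<in> diagrams_vert n"
  shows "row_matching n (vertical_pos b m) (edge_end b m)"
proof -
  let ?V = "vertical_pos b m" and ?P = "edge_end b m"
  note d = diagrams_vertD[OF D]
  have "?V \<noteq> {}"
  proof -
    obtain k b' where k: "snd (m (k, b')) \<noteq> b'" using d(5) by auto
    then have "k \<in> vertical_pos b' m" unfolding vertical_pos_def by simp
    then show ?thesis
      using edge_end_vertical(1)[OF D, of k b'] k by (cases "b' = b") auto
  qed
  moreover have "periodic n ?V" unfolding periodic_def vertical_pos_def using d(3) by simp
  moreover have "?P (k + int n) = ?P k + int n" for k unfolding edge_end_def using d(3) by simp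
  moreover have "?P k \<notin> ?V \<and> ?P (?P k) = k \<and> ?P k \<noteq> k" if k: "k \<notin> ?V" for k
  proof -
    have "m (?P k, b) = (k, b)" using d(1)[of "(k, b)"] edge_in_row[OF k] by simp
    then show ?thesis using edge_in_row[OF k] d(2)[of "(k, b)"] unfolding vertical_pos_def edge_end_def
      by auto
  qed
  ultimately show ?thesis unfolding row_matching_def
    using diagram_arc_not_over_vertical[OF D] diagram_arcs_not_crossing[OF D] by blast
qed

lemma edge_end_top_strict_mono:
  assumes D: "m \<in> diagrams_vert n" and k: "k \<in> vertical_pos True m"
    and l: "l \<in> vertical_pos True m" and lt: "k < l"
  shows "edge_end True m k < edge_end True m l"
proof (rule ccontr)
  assume "\<not> edge_end True m k < edge_end True m l"
  moreover have "edge_end True m k \<noteq> edge_end True m l"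
    using edge_end_vertical(2)[OF D k] edge_end_vertical(2)[OF D l] lt by force
  ultimately have "edge_end True m l < edge_end True m k" by simp
  moreover have "m (edge_end True m k, False) = (k, True)" "m (edge_end True m l, False) = (l, True)"
    using edge_end_vertical(2)[OF D] edge_vertical[of _ False m] edge_end_vertical(1)[OF D] k l
    by (metis (full_types))+
  ultimately show False
    using diagrams_vertD(4)[OF D, of "(edge_end True m l, False)" "(edge_end True m k, False)"] lt
    unfolding bnd_less_def by simp
qed

lemma rank_diff_strict_mono_image:
  assumes maps: "\<forall>v\<in>V. g v \<in> W" and mono: "\<forall>u\<in>V. \<forall>v\<in>V. u < v \<longrightarrow> g u < g v"
    and onto: "\<forall>y\<in>W. \<exists>x\<in>V. g x = y" and u: "u \<in> V" and v: "v \<in> V" and uv: "u < v"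
  shows "rank W (g v) - rank W (g u) = rank V v - rank V u"
proof -
  have mono_le: "g x \<le> g y" if "x \<in> V" "y \<in> V" "x \<le> y" for x y
    using mono that by (cases "x = y") (auto simp: less_imp_le)
  have "g ` (V \<inter> {u<..v}) = W \<inter> {g u<..g v}"
  proof
    show "g ` (V \<inter> {u<..v}) \<subseteq> W \<inter> {g u<..g v}"
      using maps mono mono_le u v by auto
  next
    show "W \<inter> {g u<..g v} \<subseteq> g ` (V \<inter> {u<..v})"
    proof
      fix y assume y: "y \<in> W \<inter> {g u<..g v}"
      then obtain x where x: "x \<in> V" "g x = y" using onto by auto
      have "u < x" using mono_le[OF x(1) u] x y by force
      moreover have "x \<le> v" using mono[rule_format, OF v x(1)] x y by force
      ultimately show "y \<in> g ` (V \<inter> {u<..v})" using x by auto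
    qed
  qed
  moreover have "inj_on g (V \<inter> {u<..v})"
    using mono by (intro inj_onI) (metis IntD1 less_irrefl linorder_neqE_linordered_idom)
  ultimately have "card (W \<inter> {g u<..g v}) = card (V \<inter> {u<..v})" using card_image by metis
  moreover have "g u < g v" using mono u v uv by simp
  ultimately show ?thesis using rank_diff[of u v V] rank_diff[of "g u" "g v" W] uv by simp
qed

lemma rank_shift_const:
  assumes "\<forall>v\<in>V. g v \<in> W" "\<forall>u\<in>V. \<forall>v\<in>V. u < v \<longrightarrow> g u < g v" "\<forall>y\<in>W. \<exists>x\<in>V. g x = y"
    and "u \<in> V" "v \<in> V"
  shows "rank W (g v) - rank V v = rank W (g u) - rank V u"
proof -
  consider "u < v" | "u = v" | "v < u" by linarith
  then show ?thesis
    using rank_diff_strict_mono_image[OF assms(1-3)] assms(4,5) by cases fastforce+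
qed

lemma card_rank_between:
  assumes surj: "\<And>e. \<exists>v\<in>V. rank V v = e"
  shows "card {v \<in> V. lo \<le> rank V v \<and> rank V v \<le> hi} = nat (hi - lo + 1)"
proof -
  have "bij_betw (rank V) {v \<in> V. lo \<le> rank V v \<and> rank V v \<le> hi} {lo..hi}"
  proof (rule bij_betwI')
    fix x y assume "x \<in> {v \<in> V. lo \<le> rank V v \<and> rank V v \<le> hi}"
      "y \<in> {v \<in> V. lo \<le> rank V v \<and> rank V v \<le> hi}"
    then show "rank V x = rank V y \<longleftrightarrow> x = y" using rank_inj[of x V y] by auto
  next
    fix e assume e: "e \<in> {lo..hi}"
    obtain v where "v \<in> V" "rank V v = e" using surj by blast
    then show "\<exists>x\<in>{v \<in> V. lo \<le> rank V v \<and> rank V v \<le> hi}. e = rank V x" using e by force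
  qed simp
  then show ?thesis using bij_betw_same_card by fastforce
qed

text \<open>Ranks are counted from the cut \<open>x = 1/2\<close>, so an edge from \<open>v\<close> to \<open>g v\<close> crosses the cut
  from right to left iff \<open>rank V v \<in> {1..c}\<close> and from left to right iff \<open>rank V v \<in> {c + 1..0}\<close>.\<close>

lemma crossings_eq_rank_shift:
  assumes surj: "\<And>e. \<exists>v\<in>V. rank V v = e" and maps: "\<forall>v\<in>V. g v \<in> W"
    and shift: "\<forall>v\<in>V. rank W (g v) = rank V v - c"
  shows "int (card {v \<in> V. 1 \<le> v \<and> g v \<le> 0}) - int (card {v \<in> V. v \<le> 0 \<and> 1 \<le> g v}) = c"
proof -
  have pos_iff: "1 \<le> v \<longleftrightarrow> 1 \<le> rank V v" "1 \<le> g v \<longleftrightarrow> c + 1 \<le> rank V v" if "v \<in> V" for v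
    using rank_pos_iff[OF that] rank_pos_iff[of "g v" W] maps shift that by auto
  have "{v \<in> V. 1 \<le> v \<and> g v \<le> 0} = {v \<in> V. 1 \<le> rank V v \<and> rank V v \<le> c}"
  proof (rule Collect_cong)
    fix v show "v \<in> V \<and> 1 \<le> v \<and> g v \<le> 0 \<longleftrightarrow> v \<in> V \<and> 1 \<le> rank V v \<and> rank V v \<le> c"
      using pos_iff[of v] by linarith
  qed
  moreover have "{v \<in> V. v \<le> 0 \<and> 1 \<le> g v} = {v \<in> V. c + 1 \<le> rank V v \<and> rank V v \<le> 0}"
  proof (rule Collect_cong)
    fix v show "v \<in> V \<and> v \<le> 0 \<and> 1 \<le> g v \<longleftrightarrow> v \<in> V \<and> c + 1 \<le> rank V v \<and> rank V v \<le> 0"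
      using pos_iff[of v] by linarith
  qed
  ultimately show ?thesis using card_rank_between[OF surj] by simp
qed

lemma card_vertical_edges:
  assumes D: "m \<in> diagrams_vert n"
  shows "card {(i, j). m (j, False) = (i, True) \<and> Q i j} =
    card {v \<in> vertical_pos True m. Q v (edge_end True m v)}"
proof -
  have pairs: "{(i, j). m (j, False) = (i, True) \<and> Q i j} =
      (\<lambda>v. (v, edge_end True m v)) ` {v \<in> vertical_pos True m. Q v (edge_end True m v)}"
  proof (intro equalityI subsetI)
    fix e assume "e \<in> {(i, j). m (j, False) = (i, True) \<and> Q i j}"
    then obtain i j where e: "e = (i, j)" "m (j, False) = (i, True)" "Q i j" by blast
    then have "m (i, True) = (j, False)" using diagrams_vertD(1)[OF D, of "(j, False)"] by simp
    then show "e \<in> (\<lambda>v. (v, edge_end True m v)) ` {v \<in> vertical_pos True m. Q v (edge_end True m v)}"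
      using e unfolding vertical_pos_def edge_end_def by force
  next
    fix e assume "e \<in> (\<lambda>v. (v, edge_end True m v)) ` {v \<in> vertical_pos True m. Q v (edge_end True m v)}"
    then obtain v where e: "e = (v, edge_end True m v)" "v \<in> vertical_pos True m"
      "Q v (edge_end True m v)" by blast
    then have "m (edge_end True m v, False) = (v, True)"
      using diagrams_vertD(1)[OF D, of "(v, True)"] edge_vertical[OF e(2)] by simp
    then show "e \<in> {(i, j). m (j, False) = (i, True) \<and> Q i j}" using e by simp
  qed
  have "inj_on (\<lambda>v. (v, edge_end True m v)) X" for X by (simp add: inj_on_def)
  then show ?thesis unfolding pairs by (rule card_image)
qed

lemma wind_eq_rank_shift:
  assumes n: "n > 0" and D: "m \<in> diagrams_vert n"
    and shift: "\<forall>v\<in>vertical_pos True m.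
      rank (vertical_pos False m) (edge_end True m v) = rank (vertical_pos True m) v - c"
  shows "wind m = c"
proof -
  let ?V = "vertical_pos True m" and ?g = "edge_end True m"
  note row = row_matching_diagram[OF D, of True]
  have surj: "\<exists>v\<in>?V. rank ?V v = e" for e
    using rank_surj[OF n periodic_vertical[OF n row] vertical_nonempty[OF n row]] by metis
  have "w1 m = card {v \<in> ?V. 1 \<le> v \<and> ?g v \<le> 0}"
    unfolding w1_def card_vertical_edges[OF D] by (rule arg_cong[where f = card]) auto
  moreover have "w2 m = card {v \<in> ?V. v \<le> 0 \<and> 1 \<le> ?g v}"
    unfolding w2_def card_vertical_edges[OF D] by (rule arg_cong[where f = card]) auto
  ultimately show ?thesis unfolding wind_def
    using crossings_eq_rank_shift[OF surj _ shift] edge_end_vertical(1)[OF D] by fastforce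
qed

lemma rank_edge_end_top:
  assumes n: "n > 0" and D: "m \<in> diagrams_vert n" and v: "v \<in> vertical_pos True m"
  shows "rank (vertical_pos False m) (edge_end True m v) = rank (vertical_pos True m) v - wind m"
proof -
  let ?V = "vertical_pos True m" and ?W = "vertical_pos False m" and ?g = "edge_end True m"
  have maps: "\<forall>v\<in>?V. ?g v \<in> ?W" using edge_end_vertical(1)[OF D] by fastforce
  have mono: "\<forall>u\<in>?V. \<forall>v\<in>?V. u < v \<longrightarrow> ?g u < ?g v" using edge_end_top_strict_mono[OF D] by blast
  have onto: "\<forall>y\<in>?W. \<exists>x\<in>?V. ?g x = y" using edge_end_vertical[OF D, of _ False] by fastforce
  define c where "c = rank ?V v - rank ?W (?g v)"
  have shift: "\<forall>u\<in>?V. rank ?W (?g u) = rank ?V u - c"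
    using rank_shift_const[OF maps mono onto v] unfolding c_def by fastforce
  then show ?thesis using wind_eq_rank_shift[OF n D shift] v by simp
qed

lemma card_vertical_window_eq:
  assumes n: "n > 0" and D: "m \<in> diagrams_vert n"
  shows "card (vertical_pos True m \<inter> {1..int n}) = card (vertical_pos False m \<inter> {1..int n})"
proof -
  let ?V = "vertical_pos True m" and ?W = "vertical_pos False m" and ?g = "edge_end True m"
  note rowV = row_matching_diagram[OF D, of True] and rowW = row_matching_diagram[OF D, of False]
  obtain v where v: "v \<in> ?V" using vertical_nonempty[OF n rowV] by auto
  have v': "v + int n \<in> ?V" using v periodic_vertical[OF n rowV] unfolding periodic_def by simp
  have "?g (v + int n) = ?g v + int n" unfolding edge_end_def using diagrams_vertD(3)[OF D] by simp
  then show ?thesis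
    using rank_edge_end_top[OF n D v] rank_edge_end_top[OF n D v']
      rank_add[OF n periodic_vertical[OF n rowV], of v] rank_add[OF n periodic_vertical[OF n rowW], of "?g v"]
    by simp
qed

section \<open>Reconstructing a diagram\<close>

definition rank_match :: "int set \<Rightarrow> int set \<Rightarrow> int \<Rightarrow> int \<Rightarrow> int" where
  "rank_match V W c k = (THE u. u \<in> W \<and> rank W u = rank V k - c)"

lemma rank_match_eqI:
  assumes "u \<in> W" "rank W u = rank V k - c"
  shows "rank_match V W c k = u"
  unfolding rank_match_def
proof (rule the_equality)
  show "u \<in> W \<and> rank W u = rank V k - c" using assms by simp
  fix x assume "x \<in> W \<and> rank W x = rank V k - c"
  then show "x = u" using rank_inj[of x W u] assms by simp
qed

context
  fixes n :: nat and V W :: "int set" and c :: int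
  assumes n: "n > 0" and W: "periodic n W" "W \<noteq> {}"
begin

lemma rank_match: "rank_match V W c k \<in> W \<and> rank W (rank_match V W c k) = rank V k - c"
proof -
  obtain u where "u \<in> W" "rank W u = rank V k - c" using rank_surj[OF n W] .
  then show ?thesis using rank_match_eqI by metis
qed

lemma rank_match_inverse: "k \<in> V \<Longrightarrow> rank_match W V (- c) (rank_match V W c k) = k"
  using rank_match_eqI[of k V W] rank_match by simp

lemma rank_match_strict_mono:
  assumes "l \<in> V" "k < l"
  shows "rank_match V W c k < rank_match V W c l"
proof (rule ccontr)
  assume "\<not> rank_match V W c k < rank_match V W c l"
  then have "rank W (rank_match V W c l) \<le> rank W (rank_match V W c k)" by (simp add: rank_mono)
  moreover have "rank V k < rank V l" using rank_strict_mono assms by blast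
  ultimately show False using rank_match[of k] rank_match[of l] by simp
qed

lemma rank_match_add:
  assumes V: "periodic n V" and same_card: "card (V \<inter> {1..int n}) = card (W \<inter> {1..int n})"
  shows "rank_match V W c (k + int n) = rank_match V W c k + int n"
proof (rule rank_match_eqI)
  show "rank_match V W c k + int n \<in> W" using rank_match[of k] W(1) unfolding periodic_def by simp
  show "rank W (rank_match V W c k + int n) = rank V (k + int n) - c"
    using rank_add[OF n W(1)] rank_add[OF n V] rank_match[of k] same_card by simp
qed

end

text \<open>The inverse of the bijection: the arcs of the two rows are the lifts of \<open>A\<close> and \<open>B\<close>,
  and a top vertical position of rank \<open>r\<close> is joined to the bottom one of rank \<open>r - w\<close>.\<close>

definition diagram_of :: "nat \<Rightarrow> (nat \<Rightarrow> nat) \<Rightarrow> (nat \<Rightarrow> nat) \<Rightarrow> int \<Rightarrow> node \<Rightarrow> node" where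
  "diagram_of n A B w = (\<lambda>(k, b).
     if b then
       if k \<in> fixed_lift n A then (rank_match (fixed_lift n A) (fixed_lift n B) w k, False)
       else (arc_lift n A k, True)
     else
       if k \<in> fixed_lift n B then (rank_match (fixed_lift n B) (fixed_lift n A) (- w) k, True)
       else (arc_lift n B k, False))"

lemma diagram_of_top:
  "diagram_of n A B w (k, True) = (if k \<in> fixed_lift n A
     then (rank_match (fixed_lift n A) (fixed_lift n B) w k, False) else (arc_lift n A k, True))"
  unfolding diagram_of_def by simp

lemma diagram_of_bottom:
  "diagram_of n A B w (k, False) = (if k \<in> fixed_lift n B
     then (rank_match (fixed_lift n B) (fixed_lift n A) (- w) k, True) else (arc_lift n B k, False))"
  unfolding diagram_of_def by simp

lemma card_fixed_lift:
  assumes "A \<in> Inv_t n t"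
  shows "card (fixed_lift n A \<inter> {1..int n}) = t"
proof -
  have "{i \<in> {1..n}. int i \<in> fixed_lift n A} = fixpts n A"
    unfolding fixpts_def using of_nat_in_fixed_lift_iff by auto
  then show ?thesis using card_int_filter_Icc[of n "fixed_lift n A"] assms unfolding Inv_t_def by simp
qed

lemma matching_inv_cong: "(\<And>k. k \<notin> V \<Longrightarrow> P k = P' k) \<Longrightarrow> matching_inv n V P = matching_inv n V P'"
  unfolding matching_inv_def by (intro ext) auto

context
  fixes n t :: nat and A B :: "nat \<Rightarrow> nat" and w :: int
  assumes n: "n > 0" and t: "t > 0" and A: "A \<in> Ann n \<inter> Inv_t n t" and B: "B \<in> Ann n \<inter> Inv_t n t"
begin

lemma row_matching_lift:
  assumes "C \<in> {A, B}"
  shows "row_matching n (fixed_lift n C) (arc_lift n C)"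
proof -
  have "C \<in> Ann n" "card (fixpts n C) = t" using assms A B unfolding Inv_t_def by auto
  then show ?thesis using row_matching_arc_lift[OF n] t by fastforce
qed

lemma rank_match_lift:
  assumes "C \<in> {A, B}" "C' \<in> {A, B}"
  shows "rank_match (fixed_lift n C) (fixed_lift n C') c k \<in> fixed_lift n C'"
    "rank (fixed_lift n C') (rank_match (fixed_lift n C) (fixed_lift n C') c k) = rank (fixed_lift n C) k - c"
    "k \<in> fixed_lift n C \<Longrightarrow>
      rank_match (fixed_lift n C') (fixed_lift n C) (- c) (rank_match (fixed_lift n C) (fixed_lift n C') c k) = k"
    "l \<in> fixed_lift n C \<Longrightarrow> k < l \<Longrightarrow>
      rank_match (fixed_lift n C) (fixed_lift n C') c k < rank_match (fixed_lift n C) (fixed_lift n C') c l"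
    "rank_match (fixed_lift n C) (fixed_lift n C') c (k + int n) =
      rank_match (fixed_lift n C) (fixed_lift n C') c k + int n"
proof -
  note row' = row_matching_lift[OF assms(2)]
  note W = periodic_vertical[OF n row'] vertical_nonempty[OF n row']
  show "rank_match (fixed_lift n C) (fixed_lift n C') c k \<in> fixed_lift n C'"
    "rank (fixed_lift n C') (rank_match (fixed_lift n C) (fixed_lift n C') c k) = rank (fixed_lift n C) k - c"
    using rank_match[OF n W] by auto
  show "k \<in> fixed_lift n C \<Longrightarrow>
      rank_match (fixed_lift n C') (fixed_lift n C) (- c) (rank_match (fixed_lift n C) (fixed_lift n C') c k) = k"
    using rank_match_inverse[OF n W] .
  show "l \<in> fixed_lift n C \<Longrightarrow> k < l \<Longrightarrow>
      rank_match (fixed_lift n C) (fixed_lift n C') c k < rank_match (fixed_lift n C) (fixed_lift n C') c l"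
    using rank_match_strict_mono[OF n W] .
  have "card (fixed_lift n C \<inter> {1..int n}) = card (fixed_lift n C' \<inter> {1..int n})"
    using assms A B card_fixed_lift by auto
  then show "rank_match (fixed_lift n C) (fixed_lift n C') c (k + int n) =
      rank_match (fixed_lift n C) (fixed_lift n C') c k + int n"
    using rank_match_add[OF n W periodic_fixed_lift] by blast
qed

lemma diagram_of_involutive: "diagram_of n A B w (diagram_of n A B w x) = x \<and> diagram_of n A B w x \<noteq> x"
proof -
  obtain k b where x: "x = (k, b)" by force
  note rowA = row_matching_lift[of A] and rowB = row_matching_lift[of B]
  show ?thesis
  proof (cases b)
    case True
    then show ?thesis
      using x rank_match_lift(1,3)[where C = A and C' = B and c = w and k = k] partner_not_vertical[OF n rowA] partner_partner[OF n rowA]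
        partner_neq[OF n rowA]
      by (auto simp: diagram_of_top diagram_of_bottom)
  next
    case False
    then show ?thesis
      using x rank_match_lift(1,3)[where C = B and C' = A and c = "- w" and k = k] partner_not_vertical[OF n rowB]
        partner_partner[OF n rowB] partner_neq[OF n rowB]
      by (auto simp: diagram_of_top diagram_of_bottom)
  qed
qed

lemma diagram_of_add:
  "diagram_of n A B w (k + int n, b) =
    (fst (diagram_of n A B w (k, b)) + int n, snd (diagram_of n A B w (k, b)))"
  using rank_match_lift(5)[where C = A and C' = B and c = w and k = k] rank_match_lift(5)[where C = B and C' = A and c = "- w" and k = k]
    arc_lift_add_mult[of n A k 1] arc_lift_add_mult[of n B k 1]
    periodic_fixed_lift[of n A] periodic_fixed_lift[of n B]
  unfolding periodic_def by (cases b) (auto simp: diagram_of_top diagram_of_bottom)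

lemma diagram_of_noncrossing_top:
  assumes h: "bnd_less (ka, True) c" "bnd_less c (diagram_of n A B w (ka, True))"
    "bnd_less (diagram_of n A B w (ka, True)) (diagram_of n A B w c)"
  shows False
proof -
  note rowA = row_matching_lift[of A] and top = diagram_of_top[of n A B w]
  obtain kc where c: "c = (kc, True)" using h(1) unfolding bnd_less_def by (cases c) auto
  have ka: "ka \<notin> fixed_lift n A" using h c top unfolding bnd_less_def by (auto split: if_splits)
  have kc: "kc \<notin> fixed_lift n A" using h c top ka unfolding bnd_less_def by (auto split: if_splits)
  have "kc < ka" "arc_lift n A ka < kc" "arc_lift n A kc < arc_lift n A ka"
    using h c top ka kc unfolding bnd_less_def by auto
  then show False
    using arcs_not_crossing[OF n rowA partner_not_vertical[OF n rowA kc] partner_not_vertical[OF n rowA ka]]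
      partner_partner[OF n rowA ka] partner_partner[OF n rowA kc] by simp
qed

lemma diagram_of_noncrossing_bottom:
  assumes h: "bnd_less (ka, False) c" "bnd_less c (diagram_of n A B w (ka, False))"
    "bnd_less (diagram_of n A B w (ka, False)) (diagram_of n A B w c)"
  shows False
proof -
  let ?VA = "fixed_lift n A" and ?VB = "fixed_lift n B" and ?up = "rank_match (fixed_lift n B) (fixed_lift n A) (- w)"
  note rowA = row_matching_lift[of A] and rowB = row_matching_lift[of B]
  note top = diagram_of_top[of n A B w] and bottom = diagram_of_bottom[of n A B w]
  obtain kc bc where c: "c = (kc, bc)" by force
  show False
  proof (cases bc)
    case True
    have ka: "ka \<in> ?VB" using h c True bottom unfolding bnd_less_def by (auto split: if_splits)
    have kc: "kc \<notin> ?VA" using h c True bottom top ka unfolding bnd_less_def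
      by (auto split: if_splits)
    have "arc_lift n A kc < ?up ka" "?up ka < kc"
      using h c True bottom top ka kc unfolding bnd_less_def by auto
    then show False
      using arc_not_over_vertical'[OF n rowA kc] rank_match_lift(1)[where C = B and C' = A] by blast
  next
    case False
    have lt: "ka < kc" using h c False unfolding bnd_less_def by auto
    show False
    proof (cases "ka \<in> ?VB")
      case True
      have kc: "kc \<in> ?VB" using h c False bottom True unfolding bnd_less_def
        by (auto split: if_splits)
      have "?up kc < ?up ka" using h c False bottom True kc unfolding bnd_less_def by auto
      then show False using rank_match_lift(4)[where C = B and C' = A and c = "- w", OF _ _ kc lt] by simp
    next
      case ka: False
      have "kc < arc_lift n B ka" using h c False bottom ka unfolding bnd_less_def by auto
      show False
      proof (cases "kc \<in> ?VB")
        case True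
        then show False using arc_not_over_vertical[OF n rowB ka True] lt \<open>kc < arc_lift n B ka\<close> by blast
      next
        case kc: False
        have "arc_lift n B ka < arc_lift n B kc"
          using h c False bottom ka kc unfolding bnd_less_def by auto
        then show False
          using arcs_not_crossing[OF n rowB ka kc] lt \<open>kc < arc_lift n B ka\<close> by blast
      qed
    qed
  qed
qed

lemma diagram_of_noncrossing:
  "bnd_less a c \<Longrightarrow> bnd_less c (diagram_of n A B w a) \<Longrightarrow>
    bnd_less (diagram_of n A B w a) (diagram_of n A B w c) \<Longrightarrow> False"
  using diagram_of_noncrossing_top diagram_of_noncrossing_bottom by (cases a) (metis (full_types))

lemma diagram_of_mem: "diagram_of n A B w \<in> diagrams_vert n"
proof -
  obtain k where "k \<in> fixed_lift n A" using vertical_nonempty[OF n row_matching_lift[of A]] by auto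
  then have "has_vertical_edge (diagram_of n A B w)"
    unfolding has_vertical_edge_def by (intro exI[of _ "(k, True)"]) (simp add: diagram_of_top)
  then show ?thesis
    unfolding diagrams_vert_def is_affine_diagram_matching_def
    using diagram_of_involutive diagram_of_add diagram_of_noncrossing by blast
qed

lemma vertical_pos_diagram_of:
  "vertical_pos True (diagram_of n A B w) = fixed_lift n A"
  "vertical_pos False (diagram_of n A B w) = fixed_lift n B"
  unfolding vertical_pos_def by (auto simp: diagram_of_top diagram_of_bottom)

lemma S1_diagram_of: "S1 n (diagram_of n A B w) = A"
proof -
  have "fixpts n A \<noteq> {}" "A \<in> Ann n" using A t unfolding Inv_t_def by auto
  have "S1 n (diagram_of n A B w) = matching_inv n (fixed_lift n A) (edge_end True (diagram_of n A B w))"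
    unfolding S1_eq_matching_inv vertical_pos_diagram_of ..
  also have "\<dots> = matching_inv n (fixed_lift n A) (arc_lift n A)"
    by (rule matching_inv_cong) (simp add: edge_end_def diagram_of_top)
  also have "\<dots> = A" by (rule matching_inv_arc_lift) fact+
  finally show ?thesis .
qed

lemma S2_diagram_of: "S2 n (diagram_of n A B w) = B"
proof -
  have "fixpts n B \<noteq> {}" "B \<in> Ann n" using B t unfolding Inv_t_def by auto
  have "S2 n (diagram_of n A B w) = matching_inv n (fixed_lift n B) (edge_end False (diagram_of n A B w))"
    unfolding S2_eq_matching_inv vertical_pos_diagram_of ..
  also have "\<dots> = matching_inv n (fixed_lift n B) (arc_lift n B)"
    by (rule matching_inv_cong) (simp add: edge_end_def diagram_of_bottom)
  also have "\<dots> = B" by (rule matching_inv_arc_lift) fact+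
  finally show ?thesis .
qed

lemma wind_diagram_of: "wind (diagram_of n A B w) = w"
proof (rule wind_eq_rank_shift[OF n diagram_of_mem])
  show "\<forall>v\<in>vertical_pos True (diagram_of n A B w). rank (vertical_pos False (diagram_of n A B w))
      (edge_end True (diagram_of n A B w) v) = rank (vertical_pos True (diagram_of n A B w)) v - w"
    unfolding vertical_pos_diagram_of edge_end_def
    using rank_match_lift(2)[where C = A and C' = B and c = w] by (simp add: diagram_of_top)
qed

end

lemma diagram_rows_annular:
  assumes n: "n > 0" and D: "m \<in> diagrams_vert n"
  shows "\<exists>t>0. S1 n m \<in> Ann n \<inter> Inv_t n t \<and> S2 n m \<in> Ann n \<inter> Inv_t n t"
proof -
  note rowT = row_matching_diagram[OF D, of True] and rowB = row_matching_diagram[OF D, of False]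
  let ?t = "card (vertical_pos True m \<inter> {1..int n})"
  have "?t > 0" using card_window_pos[OF n periodic_vertical[OF n rowT] vertical_nonempty[OF n rowT]] .
  moreover have "S1 n m \<in> Ann n \<inter> Inv_t n ?t"
    using matching_inv_annular[OF n rowT] matching_inv_Inv_t[OF n rowT] unfolding S1_eq_matching_inv by simp
  moreover have "S2 n m \<in> Ann n \<inter> Inv_t n ?t"
    using matching_inv_annular[OF n rowB] matching_inv_Inv_t[OF n rowB] card_vertical_window_eq[OF n D]
    unfolding S2_eq_matching_inv by simp
  ultimately show ?thesis by blast
qed

lemma diagram_of_rows:
  assumes n: "n > 0" and D: "m \<in> diagrams_vert n"
  shows "diagram_of n (S1 n m) (S2 n m) (wind m) = m"
proof
  fix x :: node
  let ?VT = "vertical_pos True m" and ?VB = "vertical_pos False m"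
  let ?PT = "edge_end True m" and ?PB = "edge_end False m"
  note rowT = row_matching_diagram[OF D, of True] and rowB = row_matching_diagram[OF D, of False]
  have VT: "fixed_lift n (S1 n m) = ?VT" and VB: "fixed_lift n (S2 n m) = ?VB"
    unfolding S1_eq_matching_inv S2_eq_matching_inv
    using fixed_lift_matching_inv[OF n rowT] fixed_lift_matching_inv[OF n rowB] by simp_all
  have PT: "arc_lift n (S1 n m) k = ?PT k" if "k \<notin> ?VT" for k
    using arc_lift_matching_inv[OF n rowT that] unfolding S1_eq_matching_inv .
  have PB: "arc_lift n (S2 n m) k = ?PB k" if "k \<notin> ?VB" for k
    using arc_lift_matching_inv[OF n rowB that] unfolding S2_eq_matching_inv .
  obtain k b where x: "x = (k, b)" by force
  show "diagram_of n (S1 n m) (S2 n m) (wind m) x = m x"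
  proof (cases b)
    case True
    then have x: "x = (k, True)" using x by simp
    have "rank_match ?VT ?VB (wind m) k = ?PT k" if "k \<in> ?VT"
      using rank_match_eqI edge_end_vertical(1)[OF D that] rank_edge_end_top[OF n D that] by simp
    then show ?thesis
      using edge_vertical[of k True m] edge_in_row[of k True m] PT[of k]
      unfolding x diagram_of_top VT VB by auto
  next
    case False
    then have x: "x = (k, False)" using x by simp
    have "rank_match ?VB ?VT (- wind m) k = ?PB k" if "k \<in> ?VB"
      using rank_match_eqI edge_end_vertical[OF D that] rank_edge_end_top[OF n D, of "?PB k"] by simp
    then show ?thesis
      using edge_vertical[of k False m] edge_in_row[of k False m] PB[of k]
      unfolding x diagram_of_bottom VT VB by auto
  qed
qed

theorem lemma3p2p4:
  fixes n :: nat
  assumes "n \<ge> 3"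
  shows "(\<forall>D \<in> diagrams_vert n. \<exists>t > 0.
            S1 n D \<in> Ann n \<inter> Inv_t n t \<and> S2 n D \<in> Ann n \<inter> Inv_t n t) \<and>
         bij_betw (\<lambda>D. (S1 n D, S2 n D, wind D)) (diagrams_vert n)
           {(A, B, w). \<exists>t > 0. A \<in> Ann n \<inter> Inv_t n t \<and> B \<in> Ann n \<inter> Inv_t n t}"
proof -
  have n: "n > 0" using assms by simp
  let ?triples = "{(A, B, w). \<exists>t > 0. A \<in> Ann n \<inter> Inv_t n t \<and> B \<in> Ann n \<inter> Inv_t n t}"
  have rows: "\<forall>D \<in> diagrams_vert n. \<exists>t > 0.
      S1 n D \<in> Ann n \<inter> Inv_t n t \<and> S2 n D \<in> Ann n \<inter> Inv_t n t"
    using diagram_rows_annular[OF n] by blast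
  have "bij_betw (\<lambda>D. (S1 n D, S2 n D, wind D)) (diagrams_vert n) ?triples"
  proof (rule bij_betw_byWitness[where f' = "\<lambda>(A, B, w). diagram_of n A B w"])
    show "\<forall>D \<in> diagrams_vert n. (\<lambda>(A, B, w). diagram_of n A B w) (S1 n D, S2 n D, wind D) = D"
      using diagram_of_rows[OF n] by simp
    show "\<forall>x \<in> ?triples. (\<lambda>D. (S1 n D, S2 n D, wind D)) ((\<lambda>(A, B, w). diagram_of n A B w) x) = x"
      using S1_diagram_of[OF n] S2_diagram_of[OF n] wind_diagram_of[OF n] by fastforce
    show "(\<lambda>D. (S1 n D, S2 n D, wind D)) ` diagrams_vert n \<subseteq> ?triples"
      using rows by auto
    show "(\<lambda>(A, B, w). diagram_of n A B w) ` ?triples \<subseteq> diagrams_vert n"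
      using diagram_of_mem[OF n] by auto
  qed
  with rows show ?thesis by blast
qed

end
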